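(* Let $d\ge0$, $0\le n\le d+1$, and $x=e_1z^n\in V_d$. Let $\mu_x\colon V_d\to(\mathfrak g_d^x)^\vee$ be the moment map for the stabilizer $\mathfrak g_d^x$, $\mu_x(v)(\xi)=\frac12(\xi v,v)_{V_d}$. Then the reduced scheme of its zero fibre is $$(\mu_x^{-1}(0))_{\mathrm{red}}=z^{\lfloor\frac{n-1}{2}\rfloor+1}\mathbb C[z]e_1+z^{\lfloor\frac d2\rfloor+1}V_d.$$ In particular, if $d\in\{0,1\}$ and $n=0$, then $\mu_x^{-1}(0)$ has codimension $1$ in $V_d$; otherwise it has codimension $\ge2$.
   Context: $T=\mathbb C^2=\mathbb C\langle e_1,e_2\rangle$ with standard symplectic form $(\,,\,)_T$ and standard $\mathfrak{sl}_2$-action. $V_d=T\otimes\mathbb C[z]/(z^{d+1})$, $\mathfrak g_d=\mathfrak{sl}_2\otimes\mathbb C[z]/(z^{d+1})$ acting by $(\xi z^a)(vz^b)=(\xi v)z^{a+b}$; $\mathfrak g_d^x$ is the stabilizer of $x$ in $\mathfrak g_d$. The symplectic form on $V_d$ is $(f,g)_{V_d}=\mathrm{Res}_{z=0}(f,g)_{T[z]}/z^{d+1}$, with $(\,,\,)_{T[z]}$ the $\mathbb C[z]$-bilinear extension of $(\,,\,)_T$. Subsets such as $z^m\mathbb C[z]e_1$ are understood modulo $z^{d+1}$, as subspaces of $V_d$. *)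

theory Defs
  imports Complex_Main "HOL-Library.Product_Plus" "HOL-Library.Function_Algebras"
begin

text \<open>Elements of T = C^2 are pairs (u1,u2) = u1 e1 + u2 e2.
  Elements of V_d = T[z]/(z^(d+1)) are coefficient sequences v :: nat => T
  with v k = 0 for k > d (v k is the coefficient of z^k).
  Elements of sl2 are 2x2 matrices ((a,b),(c,e)) with a + e = 0, and
  elements of g_d = sl2[z]/(z^(d+1)) are coefficient sequences of such matrices
  vanishing beyond degree d.\<close>

type_synonym T = "complex \<times> complex"
type_synonym mat2 = "(complex \<times> complex) \<times> (complex \<times> complex)"

definition Vd :: "nat \<Rightarrow> (nat \<Rightarrow> T) set" where
  "Vd d = {v. \<forall>k>d. v k = (0, 0)}"

definition sl2 :: "mat2 set" where
  "sl2 = {((a, b), (c, e)). a + e = 0}"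

definition gd :: "nat \<Rightarrow> (nat \<Rightarrow> mat2) set" where
  "gd d = {\<xi>. (\<forall>k. \<xi> k \<in> sl2) \<and> (\<forall>k>d. \<xi> k = ((0, 0), (0, 0)))}"

definition mat_act :: "mat2 \<Rightarrow> T \<Rightarrow> T" where
  "mat_act m u = (fst (fst m) * fst u + snd (fst m) * snd u,
                  fst (snd m) * fst u + snd (snd m) * snd u)"

text \<open>action of g_d on V_d: (xi z^a)(v z^b) = (xi v) z^(a+b), truncated mod z^(d+1)\<close>
definition gact :: "nat \<Rightarrow> (nat \<Rightarrow> mat2) \<Rightarrow> (nat \<Rightarrow> T) \<Rightarrow> (nat \<Rightarrow> T)" where
  "gact d \<xi> v = (\<lambda>k. if k \<le> d then (\<Sum>a\<le>k. mat_act (\<xi> a) (v (k - a))) else (0, 0))"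

definition formT :: "T \<Rightarrow> T \<Rightarrow> complex" where
  "formT u w = fst u * snd w - snd u * fst w"

text \<open>(f,g)_{V_d} = Res_{z=0} (f,g)_{T[z]} / z^(d+1) = coefficient of z^d in (f,g)_{T[z]}\<close>
definition formV :: "nat \<Rightarrow> (nat \<Rightarrow> T) \<Rightarrow> (nat \<Rightarrow> T) \<Rightarrow> complex" where
  "formV d f g = (\<Sum>a\<le>d. formT (f a) (g (d - a)))"

text \<open>the element e1 z^n of V_d (zero if n > d)\<close>
definition xvec :: "nat \<Rightarrow> nat \<Rightarrow> (nat \<Rightarrow> T)" where
  "xvec d n = (\<lambda>k. if k = n \<and> k \<le> d then (1, 0) else (0, 0))"

definition stab :: "nat \<Rightarrow> (nat \<Rightarrow> T) \<Rightarrow> (nat \<Rightarrow> mat2) set" where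
  "stab d x = {\<xi> \<in> gd d. gact d \<xi> x = (\<lambda>k. (0, 0))}"

definition moment :: "nat \<Rightarrow> (nat \<Rightarrow> T) \<Rightarrow> (nat \<Rightarrow> T) \<Rightarrow> (nat \<Rightarrow> mat2) \<Rightarrow> complex" where
  "moment d x v \<xi> = (1/2) * formV d (gact d \<xi> v) v"

text \<open>(closed points of) the zero fibre mu_x^{-1}(0) \<subseteq> V_d\<close>
definition zero_fibre :: "nat \<Rightarrow> (nat \<Rightarrow> T) \<Rightarrow> (nat \<Rightarrow> T) set" where
  "zero_fibre d x = {v \<in> Vd d. \<forall>\<xi> \<in> stab d x. moment d x v \<xi> = 0}"

definition zpow_e1 :: "nat \<Rightarrow> int \<Rightarrow> (nat \<Rightarrow> T) set" where
  "zpow_e1 d m = {v \<in> Vd d. \<forall>k. snd (v k) = 0 \<and> (int k < m \<longrightarrow> fst (v k) = 0)}"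

definition zpow_V :: "nat \<Rightarrow> nat \<Rightarrow> (nat \<Rightarrow> T) set" where
  "zpow_V d m = {v \<in> Vd d. \<forall>k<m. v k = (0, 0)}"

definition vscale :: "complex \<Rightarrow> (nat \<Rightarrow> T) \<Rightarrow> (nat \<Rightarrow> T)" where
  "vscale c v = (\<lambda>k. (c * fst (v k), c * snd (v k)))"

end

theory Submission
  imports Defs
begin

text \<open>Write \<open>v = v\<^sub>1 e\<^sub>1 + v\<^sub>2 e\<^sub>2\<close> with \<open>v\<^sub>i \<in> \<complex>[z]/(z\<^sup>d\<^sup>+\<^sup>1)\<close>.
  For \<open>\<xi> = e z\<^sup>d\<^sup>-\<^sup>2\<^sup>j\<close> (always in the stabilizer) and \<open>\<xi> = f z\<^sup>d\<^sup>-\<^sup>2\<^sup>j\<close> (in the stabilizer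
  when \<open>2j < n\<close>) the moment map is, up to sign, the \<open>z\<^sup>2\<^sup>j\<close>-coefficient of \<open>v\<^sub>2\<^sup>2\<close>, resp. \<open>v\<^sub>1\<^sup>2\<close>.
  Their vanishing for all such \<open>j\<close> forces \<open>v\<^sub>2\<close> to vanish to order \<open>\<lfloor>d/2\<rfloor> + 1\<close> and \<open>v\<^sub>1\<close> to
  order \<open>\<lfloor>(n+1)/2\<rfloor>\<close>. Conversely, the coefficients of a stabilizing \<open>\<xi>\<close> in degrees
  \<open>\<le> d - n\<close> are multiples of \<open>e\<close>, which pair only second components, and those of higher
  degree pair coefficients of total degree \<open>< n\<close>; so every such \<open>v\<close> lies in the zero fibre.
  The fibre is thus a coordinate subspace of codimension \<open>\<lfloor>(n+1)/2\<rfloor> + \<lfloor>d/2\<rfloor> + 1\<close>.\<close>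

definition gmonom :: "nat \<Rightarrow> mat2 \<Rightarrow> nat \<Rightarrow> mat2" where
  "gmonom a M = (\<lambda>b. if b = a then M else ((0, 0), (0, 0)))"

lemma formT_zero_left [simp]: "formT (0, 0) w = 0"
  by (simp add: formT_def)

lemma gact_gmonom:
  assumes "k \<le> d"
  shows "gact d (gmonom a M) v k = (if a \<le> k then mat_act M (v (k - a)) else (0, 0))"
proof -
  have "gact d (gmonom a M) v k = (\<Sum>b\<le>k. mat_act (gmonom a M b) (v (k - b)))"
    using assms by (simp add: gact_def)
  also have "\<dots> = (\<Sum>b\<le>k. if b = a then mat_act M (v (k - a)) else 0)"
    by (intro sum.cong) (simp_all add: gmonom_def mat_act_def zero_prod_def)
  finally show ?thesis by (simp add: zero_prod_def)
qed

lemma formV_gact_gmonom: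
  assumes "a + m = d"
  shows "formV d (gact d (gmonom a M) v) v = (\<Sum>b\<le>m. formT (mat_act M (v b)) (v (m - b)))"
proof -
  have "formV d (gact d (gmonom a M) v) v
      = (\<Sum>k\<le>d. if a \<le> k then formT (mat_act M (v (k - a))) (v (d - k)) else 0)"
    unfolding formV_def by (intro sum.cong) (auto simp: gact_gmonom)
  also have "\<dots> = (\<Sum>k\<in>{a..d}. formT (mat_act M (v (k - a))) (v (d - k)))"
    by (rule sum.mono_neutral_cong_right) auto
  also have "\<dots> = (\<Sum>b\<in>{0..m}. formT (mat_act M (v b)) (v (d - (b + a))))"
    using assms sum.shift_bounds_cl_nat_ivl[of "\<lambda>k. formT (mat_act M (v (k - a))) (v (d - k))" 0 a m]
    by (simp add: add.commute)
  also have "\<dots> = (\<Sum>b\<in>{0..m}. formT (mat_act M (v b)) (v (m - b)))"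
    using assms by (intro sum.cong) auto
  finally show ?thesis by (simp add: atLeast0AtMost)
qed

lemma square_coeffs_vanish:
  fixes c :: "nat \<Rightarrow> 'a::idom"
  assumes "\<And>j. j < J \<Longrightarrow> (\<Sum>b\<le>2*j. c b * c (2*j - b)) = 0"
  shows "\<forall>i<J. c i = 0"
  using assms
proof (induction J)
  case (Suc J)
  then have low: "\<forall>i<J. c i = 0" by simp
  have "(\<Sum>b\<le>2*J. c b * c (2*J - b)) = (\<Sum>b\<le>2*J. if b = J then c J * c J else 0)"
  proof (rule sum.cong)
    fix b assume "b \<in> {..2*J}"
    then have "b \<le> 2*J" by simp
    then have "b = J \<or> b < J \<or> 2*J - b < J" by linarith
    then show "c b * c (2*J - b) = (if b = J then c J * c J else 0)"
      using low by (auto simp: mult_2)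
  qed simp
  then have "c J * c J = 0" using Suc.prems[of J] by simp
  then show ?case using low less_Suc_eq by auto
qed simp

definition e_mat :: mat2 where "e_mat = ((0, 1), (0, 0))"
definition f_mat :: mat2 where "f_mat = ((0, 0), (1, 0))"

lemma formT_mat_act_e_mat: "formT (mat_act e_mat u) w = snd u * snd w"
  by (simp add: formT_def mat_act_def e_mat_def)

lemma formT_mat_act_f_mat: "formT (mat_act f_mat u) w = - (fst u * fst w)"
  by (simp add: formT_def mat_act_def f_mat_def)

lemma gmonom_in_stab_xvec:
  assumes "M \<in> sl2" "a \<le> d"
    and kills: "\<And>k. a \<le> k \<Longrightarrow> k \<le> d \<Longrightarrow> mat_act M (xvec d n (k - a)) = (0, 0)"
  shows "gmonom a M \<in> stab d (xvec d n)"
proof -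
  have "gmonom a M \<in> gd d"
    using assms(1,2) by (auto simp: gd_def gmonom_def sl2_def)
  moreover have "gact d (gmonom a M) (xvec d n) k = (0, 0)" for k
    by (cases "k \<le> d") (auto simp: gact_gmonom kills, simp add: gact_def)
  ultimately show ?thesis
    by (auto simp: stab_def)
qed

lemma gmonom_e_mat_in_stab: "a \<le> d \<Longrightarrow> gmonom a e_mat \<in> stab d (xvec d n)"
  by (rule gmonom_in_stab_xvec) (auto simp: e_mat_def sl2_def mat_act_def xvec_def)

lemma gmonom_f_mat_in_stab: "a \<le> d \<Longrightarrow> d < a + n \<Longrightarrow> gmonom a f_mat \<in> stab d (xvec d n)"
  by (rule gmonom_in_stab_xvec) (auto simp: f_mat_def sl2_def mat_act_def xvec_def)

lemma stab_xvec_low_coeff: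
  assumes "\<xi> \<in> stab d (xvec d n)" "a + n \<le> d"
  shows "\<exists>q. \<xi> a = ((0, q), (0, 0))"
proof -
  obtain p q r s where \<xi>a: "\<xi> a = ((p, q), (r, s))"
    by (metis prod.collapse)
  have "\<xi> a \<in> sl2"
    using assms(1) by (simp add: stab_def gd_def)
  then have "p + s = 0"
    using \<xi>a by (simp add: sl2_def)
  have "(0, 0) = gact d \<xi> (xvec d n) (a + n)"
    using assms(1) by (simp add: stab_def)
  also have "\<dots> = (\<Sum>b\<le>a + n. mat_act (\<xi> b) (xvec d n (a + n - b)))"
    using assms(2) by (simp add: gact_def)
  also have "\<dots> = (\<Sum>b\<le>a + n. if b = a then mat_act (\<xi> a) (1, 0) else 0)"
    using assms(2) by (intro sum.cong) (auto simp: xvec_def zero_prod_def mat_act_def)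
  finally have "mat_act (\<xi> a) (1, 0) = (0, 0)"
    by (simp add: zero_prod_def)
  then have "p = 0" "r = 0"
    using \<xi>a by (simp_all add: mat_act_def)
  with \<open>p + s = 0\<close> \<xi>a show ?thesis by auto
qed

lemma formT_sum_left: "formT (sum f A) w = (\<Sum>a\<in>A. formT (f a) w)"
  by (simp add: formT_def fst_sum snd_sum sum_distrib_right sum_subtractf)

definition staircase :: "nat \<Rightarrow> nat \<Rightarrow> nat \<Rightarrow> (nat \<Rightarrow> T) set" where
  "staircase d N D = {v \<in> Vd d. \<forall>k. (k < N \<longrightarrow> fst (v k) = 0) \<and> (k < D \<longrightarrow> snd (v k) = 0)}"

lemma staircase_subset_zero_fibre:
  assumes "N \<le> D" "d < 2 * D" "n \<le> 2 * N"
  shows "staircase d N D \<subseteq> zero_fibre d (xvec d n)"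
proof
  fix v assume v: "v \<in> staircase d N D"
  have term_vanishes: "formT (mat_act (\<xi> a) (v (k - a))) (v (d - k)) = 0"
    if \<xi>: "\<xi> \<in> stab d (xvec d n)" and "a \<le> k" "k \<le> d" for \<xi> a k
  proof (cases "a + n \<le> d")
    case True
    then obtain q where "\<xi> a = ((0, q), (0, 0))"
      using stab_xvec_low_coeff[OF \<xi>] by blast
    moreover have "k - a < D \<or> d - k < D"
      using assms \<open>a \<le> k\<close> \<open>k \<le> d\<close> by linarith
    then have "snd (v (k - a)) = 0 \<or> snd (v (d - k)) = 0"
      using v unfolding staircase_def by blast
    ultimately show ?thesis
      by (auto simp: formT_def mat_act_def)
  next
    case False
    then have "k - a < N \<or> d - k < N"
      using assms \<open>a \<le> k\<close> \<open>k \<le> d\<close> by linarith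
    then have "v (k - a) = (0, 0) \<or> v (d - k) = (0, 0)"
      using v assms(1) unfolding staircase_def by (auto simp: prod_eq_iff)
    then show ?thesis
      by (auto simp: formT_def mat_act_def)
  qed
  have "formV d (gact d \<xi> v) v = 0" if "\<xi> \<in> stab d (xvec d n)" for \<xi>
    unfolding formV_def gact_def
    by (auto intro!: sum.neutral simp: formT_sum_left term_vanishes[OF that])
  with v show "v \<in> zero_fibre d (xvec d n)"
    by (simp add: zero_fibre_def moment_def staircase_def)
qed

lemma zero_fibre_subset_staircase:
  assumes "n \<le> d + 1"
  shows "zero_fibre d (xvec d n) \<subseteq> staircase d ((n + 1) div 2) (d div 2 + 1)"
proof
  fix v assume "v \<in> zero_fibre d (xvec d n)"
  then have "v \<in> Vd d"
    and moment_zero: "\<And>\<xi>. \<xi> \<in> stab d (xvec d n) \<Longrightarrow> formV d (gact d \<xi> v) v = 0"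
    by (auto simp: zero_fibre_def moment_def)
  have "(\<Sum>b\<le>2*j. snd (v b) * snd (v (2*j - b))) = 0" if "j < d div 2 + 1" for j
    using that moment_zero[OF gmonom_e_mat_in_stab[of "d - 2*j" d n]]
      formV_gact_gmonom[of "d - 2*j" "2*j" d e_mat v]
    by (simp add: formT_mat_act_e_mat)
  then have snd_vanish: "\<forall>i < d div 2 + 1. snd (v i) = 0"
    by (rule square_coeffs_vanish)
  have "(\<Sum>b\<le>2*j. fst (v b) * fst (v (2*j - b))) = 0" if "j < (n + 1) div 2" for j
    using that assms moment_zero[OF gmonom_f_mat_in_stab[of "d - 2*j" d n]]
      formV_gact_gmonom[of "d - 2*j" "2*j" d f_mat v]
    by (simp add: formT_mat_act_f_mat sum_negf)
  then have fst_vanish: "\<forall>i < (n + 1) div 2. fst (v i) = 0"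
    by (rule square_coeffs_vanish)
  show "v \<in> staircase d ((n + 1) div 2) (d div 2 + 1)"
    using \<open>v \<in> Vd d\<close> fst_vanish snd_vanish by (simp add: staircase_def)
qed

lemma staircase_eq_set_sum:
  assumes "N \<le> D"
  shows "staircase d N D = {p + q | p q. p \<in> zpow_e1 d (int N) \<and> q \<in> zpow_V d D}"
proof (intro equalityI subsetI)
  fix s assume s: "s \<in> staircase d N D"
  define p where "p = (\<lambda>k. if k < D then s k else (0, 0))"
  define q where "q = (\<lambda>k. if k < D then (0, 0) else s k)"
  have "s = p + q"
    by (auto simp: p_def q_def fun_eq_iff zero_prod_def)
  moreover have "p \<in> zpow_e1 d (int N)" "q \<in> zpow_V d D"
    using s by (auto simp: p_def q_def zpow_e1_def zpow_V_def staircase_def Vd_def)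
  ultimately show "s \<in> {p + q | p q. p \<in> zpow_e1 d (int N) \<and> q \<in> zpow_V d D}"
    by blast
next
  fix s assume "s \<in> {p + q | p q. p \<in> zpow_e1 d (int N) \<and> q \<in> zpow_V d D}"
  then obtain p q where "s = p + q" "p \<in> zpow_e1 d (int N)" "q \<in> zpow_V d D"
    by blast
  with assms show "s \<in> staircase d N D"
    by (auto simp: staircase_def zpow_e1_def zpow_V_def Vd_def zero_prod_def)
qed

interpretation V: vector_space vscale
  by unfold_locales (auto simp: vscale_def fun_eq_iff algebra_simps)

definition e1_monom :: "nat \<Rightarrow> nat \<Rightarrow> T" where
  "e1_monom k = (\<lambda>j. (of_bool (j = k), 0))"

definition e2_monom :: "nat \<Rightarrow> nat \<Rightarrow> T" where
  "e2_monom k = (\<lambda>j. (0, of_bool (j = k)))"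

lemma e1_monom_eq_iff [simp]: "e1_monom j = e1_monom k \<longleftrightarrow> j = k"
  by (auto simp: e1_monom_def fun_eq_iff)

lemma e2_monom_eq_iff [simp]: "e2_monom j = e2_monom k \<longleftrightarrow> j = k"
  by (auto simp: e2_monom_def fun_eq_iff)

lemma e1_monom_neq_e2_monom [simp]: "e1_monom j \<noteq> e2_monom k" "e2_monom k \<noteq> e1_monom j"
  by (auto simp: e1_monom_def e2_monom_def fun_eq_iff)

lemma sum_apply: "sum f A x = (\<Sum>a\<in>A. f a x)"
  by (induction A rule: infinite_finite_induct) auto

lemma dim_staircase: "V.dim (staircase d N D) = (d + 1 - N) + (d + 1 - D)"
proof (rule V.dim_unique)
  let ?B = "e1_monom ` {N..d} \<union> e2_monom ` {D..d}"
  show "?B \<subseteq> staircase d N D"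
    by (auto simp: staircase_def Vd_def e1_monom_def e2_monom_def)
  show "staircase d N D \<subseteq> V.span ?B"
  proof
    fix s assume s: "s \<in> staircase d N D"
    have "s = (\<Sum>k\<in>{N..d}. vscale (fst (s k)) (e1_monom k))
            + (\<Sum>k\<in>{D..d}. vscale (snd (s k)) (e2_monom k))"
      using s by (auto simp: fun_eq_iff sum_apply fst_sum snd_sum vscale_def prod_eq_iff
          e1_monom_def e2_monom_def staircase_def Vd_def Int_insert_right not_le)
    also have "\<dots> \<in> V.span ?B"
      by (intro V.span_add V.span_sum V.span_scale V.span_base) auto
    finally show "s \<in> V.span ?B" .
  qed
  show "V.independent ?B"
  proof (rule V.independent_if_scalars_zero)
    fix c w assume combination_zero: "(\<Sum>u\<in>?B. vscale (c u) u) = 0" and "w \<in> ?B"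
    then consider k where "w = e1_monom k" "k \<in> {N..d}" | k where "w = e2_monom k" "k \<in> {D..d}"
      by blast
    then show "c w = 0"
    proof cases
      case 1
      have "0 = fst ((\<Sum>u\<in>?B. vscale (c u) u) k)"
        using combination_zero by simp
      also have "\<dots> = (\<Sum>u\<in>?B. if u = w then c w else 0)"
        unfolding sum_apply fst_sum using 1
        by (intro sum.cong) (auto simp: vscale_def e1_monom_def e2_monom_def)
      finally show ?thesis
        using \<open>w \<in> ?B\<close> by simp
    next
      case 2
      have "0 = snd ((\<Sum>u\<in>?B. vscale (c u) u) k)"
        using combination_zero by simp
      also have "\<dots> = (\<Sum>u\<in>?B. if u = w then c w else 0)"
        unfolding sum_apply snd_sum using 2
        by (intro sum.cong) (auto simp: vscale_def e1_monom_def e2_monom_def)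
      finally show ?thesis
        using \<open>w \<in> ?B\<close> by simp
    qed
  qed simp
  have "card ?B = card (e1_monom ` {N..d}) + card (e2_monom ` {D..d})"
    by (rule card_Un_disjoint) auto
  also have "\<dots> = (d + 1 - N) + (d + 1 - D)"
    by (simp add: card_image inj_on_def)
  finally show "card ?B = (d + 1 - N) + (d + 1 - D)" .
qed

lemma zero_fibre_eq_staircase:
  assumes "n \<le> d + 1"
  shows "zero_fibre d (xvec d n) = staircase d ((n + 1) div 2) (d div 2 + 1)"
proof (rule equalityI)
  show "staircase d ((n + 1) div 2) (d div 2 + 1) \<subseteq> zero_fibre d (xvec d n)"
    by (rule staircase_subset_zero_fibre) (use assms in presburger)+
qed (rule zero_fibre_subset_staircase[OF assms])

theorem proposition3p7:
  fixes d n :: nat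
  assumes "n \<le> d + 1"
  shows "zero_fibre d (xvec d n) =
           {p + q | p q. p \<in> zpow_e1 d ((int n - 1) div 2 + 1) \<and> q \<in> zpow_V d (d div 2 + 1)}
         \<and> ((d \<in> {0, 1} \<and> n = 0) \<longrightarrow>
             int (2 * (d + 1)) - int (vector_space.dim vscale (zero_fibre d (xvec d n))) = 1)
         \<and> (\<not> (d \<in> {0, 1} \<and> n = 0) \<longrightarrow>
             int (2 * (d + 1)) - int (vector_space.dim vscale (zero_fibre d (xvec d n))) \<ge> 2)"
proof -
  define N where "N = (n + 1) div 2"
  define D where "D = d div 2 + 1"
  have "N \<le> D"
    using assms unfolding N_def D_def by linarith
  have "D \<le> d + 1"
    unfolding D_def by simp
  have N_eq: "(int n - 1) div 2 + 1 = int N"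
    unfolding N_def by presburger
  have fibre: "zero_fibre d (xvec d n) = staircase d N D"
    using zero_fibre_eq_staircase[OF assms] by (simp add: N_def D_def)
  have codim: "int (2 * (d + 1)) - int (V.dim (zero_fibre d (xvec d n))) = int (N + D)"
    using \<open>N \<le> D\<close> \<open>D \<le> d + 1\<close> by (simp add: fibre dim_staircase)
  have codim_one: "N + D = 1 \<longleftrightarrow> d \<in> {0, 1} \<and> n = 0"
    unfolding N_def D_def by auto
  have "zero_fibre d (xvec d n) =
      {p + q | p q. p \<in> zpow_e1 d ((int n - 1) div 2 + 1) \<and> q \<in> zpow_V d (d div 2 + 1)}"
    using fibre N_eq staircase_eq_set_sum[OF \<open>N \<le> D\<close>] by (simp add: D_def)
  moreover have "D \<ge> 1"
    by (simp add: D_def)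
  ultimately show ?thesis
    unfolding codim using codim_one by linarith
qed

end
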